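(* Let $k\in[n]$, let $\Gamma^{-1/2}\Sigma\Gamma^{-1/2}=V\Lambda V^T$ with $V$ orthogonal and $\Lambda=\mathrm{diag}(\lambda_1,\dots,\lambda_n)$, and let $A$ be the symmetric matrix with $A_{ii}=\frac{V_{ki}^2}{4\lambda_i}+\sum_{\ell=1}^n\frac{V_{k\ell}^2}{2(\lambda_i+\lambda_\ell)}$ and $A_{ij}=\frac{V_{ki}V_{kj}}{2(\lambda_i+\lambda_j)}$ for $i\neq j$. Then all eigenvalues of $\Lambda^{1/2}A\Lambda^{1/2}$ are real and lie in the open interval $(0,1)$.
   Context: $\Sigma\in\mathbb{R}^{n\times n}$ is symmetric positive definite and $\Gamma=\mathrm{diag}(\gamma_1,\dots,\gamma_n)$ with all $\gamma_i>0$; hence $\Gamma^{-1/2}\Sigma\Gamma^{-1/2}$ is symmetric positive definite and all $\lambda_i>0$. *)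

theory Defs
  imports "HOL-Analysis.Analysis"
begin

definition diag_mat :: "('n::finite \<Rightarrow> real) \<Rightarrow> real^'n^'n" where
  "diag_mat d = (\<chi> i j. if i = j then d i else 0)"

definition pos_def :: "real^'n^'n \<Rightarrow> bool" where
  "pos_def S \<longleftrightarrow> transpose S = S \<and> (\<forall>x. x \<noteq> 0 \<longrightarrow> x \<bullet> (S *v x) > 0)"

definition complex_eigenvalue :: "real^'n^'n \<Rightarrow> complex \<Rightarrow> bool" where
  "complex_eigenvalue M mu \<longleftrightarrow>
     (\<exists>v :: complex^'n. v \<noteq> 0 \<and>
        (\<chi> i j. complex_of_real (M $ i $ j)) *v v = mu *s v)"

end

theory Submission
  imports Defs
begin

text \<open>The eigenvalues of a real symmetric matrix are real and lie strictly between any strict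
bounds on its Rayleigh quotient. For \<open>M = \<Lambda>^(1/2) A \<Lambda>^(1/2)\<close>, \<open>x = \<Lambda>^(1/2) y\<close> and \<open>v\<close> the
\<open>k\<close>-th row of \<open>V\<close>, the quadratic form is a sum of squares,
\<open>y \<bullet> M y = \<Sum>\<^sub>i\<^sub>l (x_i v_l + x_l v_i)^2 / (4 (\<lambda>_i + \<lambda>_l))\<close>. It is positive for \<open>y \<noteq> 0\<close>
since \<open>v \<noteq> 0\<close>, and \<open>(a + b)^2/(p + q) \<le> a^2/p + b^2/q\<close> bounds it termwise by
\<open>|v|^2 (\<Sum>\<^sub>i x_i^2/\<lambda>_i) / 2 = |y|^2 / 2\<close>. So all eigenvalues even lie in \<open>(0, 1/2]\<close>.\<close>

lemma symmetric_matrix_inner_swap: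
  fixes M :: "real^'n^'n"
  assumes "transpose M = M"
  shows "x \<bullet> (M *v y) = y \<bullet> (M *v x)"
  by (metis assms dot_lmul_matrix inner_commute transpose_matrix_vector)

lemma transpose_diag_mat: "transpose (diag_mat d) = diag_mat d"
  by (simp add: diag_mat_def transpose_def vec_eq_iff)

lemma diag_mat_mult_vector: "diag_mat d *v y = (\<chi> i. d i * y$i)"
  by (simp add: diag_mat_def matrix_vector_mult_def vec_eq_iff if_distrib[of "\<lambda>z. z * _"]
      cong: if_cong)

lemma inner_diag_congruence:
  fixes A :: "real^'n^'n"
  shows "y \<bullet> ((diag_mat d ** A ** diag_mat d) *v y)
       = (diag_mat d *v y) \<bullet> (A *v (diag_mat d *v y))"
  using symmetric_matrix_inner_swap[OF transpose_diag_mat, where x = y and y = "A *v (diag_mat d *v y)"]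
  by (simp add: matrix_vector_mul_assoc[symmetric] inner_commute)

lemma orthogonal_matrix_row_norm:
  fixes V :: "real^'n^'n"
  assumes "orthogonal_matrix V"
  shows "(\<Sum>l\<in>UNIV. (V $ k $ l)\<^sup>2) = 1"
proof -
  have "(V ** transpose V) $ k $ k = 1"
    using assms by (simp add: orthogonal_matrix_def mat_def)
  then show ?thesis by (simp add: matrix_matrix_mult_def transpose_def power2_eq_square)
qed

lemma complex_eigenvalue_parts:
  fixes M :: "real^'n^'n"
  assumes "(\<chi> i j. complex_of_real (M $ i $ j)) *v w = mu *s w"
  defines "p \<equiv> \<chi> i. Re (w $ i)" and "q \<equiv> \<chi> i. Im (w $ i)"
  shows "M *v p = Re mu *s p - Im mu *s q" "M *v q = Im mu *s p + Re mu *s q"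
proof -
  have "(\<Sum>j\<in>UNIV. complex_of_real (M $ i $ j) * w $ j) = mu * w $ i" for i
    using assms(1) by (simp add: vec_eq_iff matrix_vector_mult_def)
  from arg_cong[OF this, of Re] arg_cong[OF this, of Im]
  show "M *v p = Re mu *s p - Im mu *s q" "M *v q = Im mu *s p + Re mu *s q"
    by (simp_all add: vec_eq_iff matrix_vector_mult_def p_def q_def algebra_simps)
qed

lemma symmetric_complex_eigenvalue_real:
  fixes M :: "real^'n^'n"
  assumes sym: "transpose M = M" and "complex_eigenvalue M mu"
  shows "Im mu = 0 \<and> (\<exists>y. y \<noteq> 0 \<and> M *v y = Re mu *s y)"
proof -
  obtain w :: "complex^'n"
    where "w \<noteq> 0" and w: "(\<chi> i j. complex_of_real (M $ i $ j)) *v w = mu *s w"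
    using assms(2) unfolding complex_eigenvalue_def by blast
  define p where "p = (\<chi> i. Re (w $ i))"
  define q where "q = (\<chi> i. Im (w $ i))"
  have Mp: "M *v p = Re mu *s p - Im mu *s q" and Mq: "M *v q = Im mu *s p + Re mu *s q"
    using complex_eigenvalue_parts[OF w] unfolding p_def q_def by simp_all
  have "p \<noteq> 0 \<or> q \<noteq> 0"
    using \<open>w \<noteq> 0\<close> by (auto simp: p_def q_def vec_eq_iff complex_eq_iff)
  hence norms: "p \<bullet> p + q \<bullet> q > 0"
    by (metis add_pos_nonneg add_nonneg_pos inner_gt_zero_iff inner_ge_zero)
  have "p \<bullet> (M *v q) = q \<bullet> (M *v p)"
    by (rule symmetric_matrix_inner_swap[OF sym])
  hence "Im mu * (p \<bullet> p + q \<bullet> q) = 0"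
    by (simp add: Mp Mq scalar_mult_eq_scaleR inner_diff_right inner_add_right inner_commute
        algebra_simps)
  hence im: "Im mu = 0" using norms by simp
  show ?thesis
  proof (cases "p = 0")
    case True
    then show ?thesis using im Mq \<open>p \<noteq> 0 \<or> q \<noteq> 0\<close> by auto
  next
    case False
    then show ?thesis using im Mp by auto
  qed
qed

lemma symmetric_complex_eigenvalue_bounds:
  fixes M :: "real^'n^'n"
  assumes sym: "transpose M = M"
    and Rayleigh: "\<And>y. y \<noteq> 0 \<Longrightarrow> a * (y \<bullet> y) < y \<bullet> (M *v y) \<and> y \<bullet> (M *v y) < b * (y \<bullet> y)"
    and "complex_eigenvalue M mu"
  shows "Im mu = 0 \<and> a < Re mu \<and> Re mu < b"
proof -
  obtain y where "y \<noteq> 0" and y: "M *v y = Re mu *s y" and "Im mu = 0"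
    using symmetric_complex_eigenvalue_real[OF sym \<open>complex_eigenvalue M mu\<close>] by blast
  have "y \<bullet> (M *v y) = Re mu * (y \<bullet> y)"
    by (simp add: y scalar_mult_eq_scaleR)
  then show ?thesis
    using Rayleigh[OF \<open>y \<noteq> 0\<close>] \<open>Im mu = 0\<close> \<open>y \<noteq> 0\<close> by (simp add: mult_less_cancel_right)
qed

lemma sq_add_div_add_le:
  fixes a b p q :: real
  assumes "p > 0" "q > 0"
  shows "(a + b)\<^sup>2 / (p + q) \<le> a\<^sup>2 / p + b\<^sup>2 / q"
proof -
  have "(a\<^sup>2 / p + b\<^sup>2 / q) * (p + q) - (a + b)\<^sup>2 = (a * q - b * p)\<^sup>2 / (p * q)"
    using assms by (simp add: field_simps power2_eq_square)
  also have "\<dots> \<ge> 0" using assms by simp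
  finally show ?thesis using assms by (simp add: divide_le_eq add_pos_pos)
qed

text \<open>The matrix \<open>A\<close> of the theorem, with \<open>v\<close> the \<open>k\<close>-th row of \<open>V\<close>: on the diagonal the first
summand is \<open>v_i^2 / (4 \<lambda>_i)\<close>.\<close>
definition coupling_matrix :: "('n::finite \<Rightarrow> real) \<Rightarrow> ('n \<Rightarrow> real) \<Rightarrow> real^'n^'n" where
  "coupling_matrix v lam = (\<chi> i j. v i * v j / (2 * (lam i + lam j))
      + (if i = j then \<Sum>l\<in>UNIV. (v l)\<^sup>2 / (2 * (lam i + lam l)) else 0))"

lemma transpose_coupling_matrix: "transpose (coupling_matrix v lam) = coupling_matrix v lam"
  by (simp add: coupling_matrix_def transpose_def vec_eq_iff add.commute mult.commute)

lemma coupling_matrix_quadratic_form: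
  fixes x :: "real^'n"
  shows "x \<bullet> (coupling_matrix v lam *v x)
       = (\<Sum>i\<in>UNIV. \<Sum>l\<in>UNIV. (x$i * v l + x$l * v i)\<^sup>2 / (4 * (lam i + lam l)))"
proof -
  define cross_terms where
    "cross_terms = (\<Sum>i\<in>UNIV. \<Sum>l\<in>UNIV. x$i * x$l * v i * v l / (2 * (lam i + lam l)))"
  define square_terms where
    "square_terms c = (\<Sum>i\<in>UNIV. \<Sum>l\<in>UNIV. (x$i)\<^sup>2 * (v l)\<^sup>2 / (c * (lam i + lam l)))"
    for c :: real
  have "(coupling_matrix v lam *v x) $ i
      = (\<Sum>l\<in>UNIV. v i * v l / (2 * (lam i + lam l)) * x$l)
        + x$i * (\<Sum>l\<in>UNIV. (v l)\<^sup>2 / (2 * (lam i + lam l)))" for i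
  proof -
    have "(\<Sum>l\<in>UNIV. (if i = l then c else 0) * x$l) = x$i * c" for c :: real
      by (simp add: if_distrib[of "\<lambda>z. z * _"] cong: if_cong)
    then show ?thesis
      unfolding coupling_matrix_def matrix_vector_mult_def
      by (simp only: vec_lambda_beta distrib_right sum.distrib)
  qed
  hence lhs: "x \<bullet> (coupling_matrix v lam *v x) = cross_terms + square_terms 2"
    by (simp add: inner_vec_def cross_terms_def square_terms_def sum_distrib_left sum.distrib
        algebra_simps power2_eq_square)
  have split_square: "(a + b)\<^sup>2 / (4 * d) = a\<^sup>2 / (4 * d) + a * b / (2 * d) + b\<^sup>2 / (4 * d)"
    and split_half: "c / (2 * d) = c / (4 * d) + c / (4 * d)" for a b c d :: real
    by (cases "d = 0"; simp add: field_simps power2_eq_square)+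
  have "(\<Sum>i\<in>UNIV. \<Sum>l\<in>UNIV. (x$i * v l + x$l * v i)\<^sup>2 / (4 * (lam i + lam l)))
      = square_terms 4 + cross_terms + (\<Sum>i\<in>UNIV. \<Sum>l\<in>UNIV. (x$l)\<^sup>2 * (v i)\<^sup>2 / (4 * (lam i + lam l)))"
    unfolding cross_terms_def square_terms_def sum.distrib[symmetric]
    by (intro sum.cong refl) (simp only: split_square power_mult_distrib mult_ac)
  moreover have "(\<Sum>i\<in>UNIV. \<Sum>l\<in>UNIV. (x$l)\<^sup>2 * (v i)\<^sup>2 / (4 * (lam i + lam l))) = square_terms 4"
    unfolding square_terms_def by (subst sum.swap) (simp add: add.commute)
  moreover have "square_terms 2 = square_terms 4 + square_terms 4"
    unfolding square_terms_def sum.distrib[symmetric] by (intro sum.cong refl) (rule split_half)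
  ultimately show ?thesis using lhs by simp
qed

lemma coupling_matrix_quadratic_form_pos:
  fixes x :: "real^'n"
  assumes lam_pos: "\<forall>i. lam i > 0" and v0: "v l0 \<noteq> 0" and "x \<noteq> 0"
  shows "0 < x \<bullet> (coupling_matrix v lam *v x)"
proof -
  define T where "T i l = (x$i * v l + x$l * v i)\<^sup>2 / (4 * (lam i + lam l))" for i l
  have T_nonneg: "0 \<le> T i l" for i l
    using lam_pos by (simp add: T_def add_pos_pos less_imp_le)
  have "\<exists>i l. 0 < T i l"
  proof (cases "x$l0 = 0")
    case True
    from \<open>x \<noteq> 0\<close> obtain i where "x$i \<noteq> 0" by (auto simp: vec_eq_iff)
    then have "0 < T i l0" using True v0 lam_pos by (simp add: T_def add_pos_pos)
    then show ?thesis by blast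
  next
    case False
    then have "0 < T l0 l0" using v0 lam_pos by (simp add: T_def)
    then show ?thesis by blast
  qed
  then obtain i l where "0 < T i l" by blast
  also have "T i l \<le> (\<Sum>l\<in>UNIV. T i l)"
    by (rule member_le_sum) (simp_all add: T_nonneg)
  also have "\<dots> \<le> (\<Sum>i\<in>UNIV. \<Sum>l\<in>UNIV. T i l)"
    by (rule member_le_sum[of i UNIV "\<lambda>i. \<Sum>l\<in>UNIV. T i l"]) (simp_all add: T_nonneg sum_nonneg)
  finally show ?thesis by (simp add: coupling_matrix_quadratic_form T_def)
qed

lemma coupling_matrix_quadratic_form_le:
  fixes x :: "real^'n"
  assumes lam_pos: "\<forall>i. lam i > 0"
  shows "x \<bullet> (coupling_matrix v lam *v x)
       \<le> (\<Sum>l\<in>UNIV. (v l)\<^sup>2) * (\<Sum>i\<in>UNIV. (x$i)\<^sup>2 / lam i) / 2"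
proof -
  define S where "S = (\<Sum>i\<in>UNIV. \<Sum>l\<in>UNIV. (x$i * v l)\<^sup>2 / lam i)"
  have "x \<bullet> (coupling_matrix v lam *v x)
      \<le> (\<Sum>i\<in>UNIV. \<Sum>l\<in>UNIV. ((x$i * v l)\<^sup>2 / lam i + (x$l * v i)\<^sup>2 / lam l) / 4)"
    unfolding coupling_matrix_quadratic_form
  proof (intro sum_mono)
    fix i l
    have term_bound: "(x$i * v l + x$l * v i)\<^sup>2 / (lam i + lam l)
        \<le> (x$i * v l)\<^sup>2 / lam i + (x$l * v i)\<^sup>2 / lam l"
      using lam_pos by (intro sq_add_div_add_le) auto
    show "(x$i * v l + x$l * v i)\<^sup>2 / (4 * (lam i + lam l))
        \<le> ((x$i * v l)\<^sup>2 / lam i + (x$l * v i)\<^sup>2 / lam l) / 4"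
      using divide_right_mono[OF term_bound, of 4] by (simp add: ac_simps)
  qed
  also have "\<dots> = (S + (\<Sum>i\<in>UNIV. \<Sum>l\<in>UNIV. (x$l * v i)\<^sup>2 / lam l)) / 4"
    by (simp only: S_def add_divide_distrib sum_divide_distrib sum.distrib[symmetric])
  also have "(\<Sum>i\<in>UNIV. \<Sum>l\<in>UNIV. (x$l * v i)\<^sup>2 / lam l) = S"
    unfolding S_def by (rule sum.swap)
  also have "S = (\<Sum>l\<in>UNIV. (v l)\<^sup>2) * (\<Sum>i\<in>UNIV. (x$i)\<^sup>2 / lam i)"
    by (simp add: S_def sum_distrib_right sum_distrib_left sum_divide_distrib power_mult_distrib
        mult_ac)
  finally show ?thesis by simp
qed

lemma scaled_coupling_matrix_Rayleigh_bounds: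
  fixes y :: "real^'n"
  assumes lam_pos: "\<forall>i. lam i > 0" and v_norm: "(\<Sum>l\<in>UNIV. (v l)\<^sup>2) = 1" and "y \<noteq> 0"
  defines "D \<equiv> diag_mat (\<lambda>i. sqrt (lam i))"
  shows "0 < y \<bullet> ((D ** coupling_matrix v lam ** D) *v y)"
    and "y \<bullet> ((D ** coupling_matrix v lam ** D) *v y) \<le> (y \<bullet> y) / 2"
proof -
  define x where "x = D *v y"
  have x: "x $ i = sqrt (lam i) * y $ i" for i
    by (simp add: x_def D_def diag_mat_mult_vector)
  have "x \<noteq> 0"
    using \<open>y \<noteq> 0\<close> lam_pos by (auto simp: vec_eq_iff x less_imp_neq[symmetric])
  obtain l0 where "v l0 \<noteq> 0"
    using v_norm by (metis (mono_tags, lifting) sum.neutral power_zero_numeral zero_neq_one)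
  have form: "y \<bullet> ((D ** coupling_matrix v lam ** D) *v y) = x \<bullet> (coupling_matrix v lam *v x)"
    unfolding D_def x_def by (rule inner_diag_congruence)
  show "0 < y \<bullet> ((D ** coupling_matrix v lam ** D) *v y)"
    unfolding form using lam_pos \<open>v l0 \<noteq> 0\<close> \<open>x \<noteq> 0\<close> by (rule coupling_matrix_quadratic_form_pos)
  have "(x$i)\<^sup>2 / lam i = (y$i)\<^sup>2" for i
    using lam_pos[rule_format, of i] by (simp add: x power_mult_distrib)
  then have "(\<Sum>i\<in>UNIV. (x$i)\<^sup>2 / lam i) = y \<bullet> y"
    by (simp add: inner_vec_def power2_eq_square)
  then show "y \<bullet> ((D ** coupling_matrix v lam ** D) *v y) \<le> (y \<bullet> y) / 2"
    unfolding form using coupling_matrix_quadratic_form_le[OF lam_pos, where v = v and x = x] v_norm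
    by simp
qed

theorem mainTheorem3:
  fixes Sigma V :: "real^'n^'n"
    and gamma lambda :: "'n \<Rightarrow> real"
    and k :: 'n
  assumes Sigma_pd: "pos_def Sigma"
    and gamma_pos: "\<forall>i. gamma i > 0"
    and V_orth: "orthogonal_matrix V"
    and decomp: "diag_mat (\<lambda>i. 1 / sqrt (gamma i)) ** Sigma ** diag_mat (\<lambda>i. 1 / sqrt (gamma i))
                 = V ** diag_mat lambda ** transpose V"
    and lambda_pos: "\<forall>i. lambda i > 0"
  shows "\<forall>mu. complex_eigenvalue
            (diag_mat (\<lambda>i. sqrt (lambda i)) **
             (\<chi> i j. if i = j
                      then (V $ k $ i)\<^sup>2 / (4 * lambda i)
                           + (\<Sum>l\<in>UNIV. (V $ k $ l)\<^sup>2 / (2 * (lambda i + lambda l)))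
                      else V $ k $ i * V $ k $ j / (2 * (lambda i + lambda j))) **
             diag_mat (\<lambda>i. sqrt (lambda i))) mu
          \<longrightarrow> Im mu = 0 \<and> 0 < Re mu \<and> Re mu < 1"
proof -
  define v where "v l = V $ k $ l" for l
  define D where "D = diag_mat (\<lambda>i. sqrt (lambda i))"
  have A: "(\<chi> i j. if i = j
                      then (V $ k $ i)\<^sup>2 / (4 * lambda i)
                           + (\<Sum>l\<in>UNIV. (V $ k $ l)\<^sup>2 / (2 * (lambda i + lambda l)))
                      else V $ k $ i * V $ k $ j / (2 * (lambda i + lambda j)))
        = coupling_matrix v lambda"
    by (simp add: vec_eq_iff coupling_matrix_def v_def power2_eq_square)
  have v_norm: "(\<Sum>l\<in>UNIV. (v l)\<^sup>2) = 1"
    using orthogonal_matrix_row_norm[OF V_orth] by (simp add: v_def)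
  have "transpose (D ** coupling_matrix v lambda ** D) = D ** coupling_matrix v lambda ** D"
    by (simp add: D_def matrix_transpose_mul transpose_diag_mat transpose_coupling_matrix
        matrix_mul_assoc)
  moreover have "0 * (y \<bullet> y) < y \<bullet> ((D ** coupling_matrix v lambda ** D) *v y)
      \<and> y \<bullet> ((D ** coupling_matrix v lambda ** D) *v y) < 1 * (y \<bullet> y)" if "y \<noteq> 0" for y
    using scaled_coupling_matrix_Rayleigh_bounds[OF lambda_pos v_norm that] that
    unfolding D_def by (simp add: inner_gt_zero_iff)
  ultimately show ?thesis
    using symmetric_complex_eigenvalue_bounds[of "D ** coupling_matrix v lambda ** D" 0 1]
    unfolding A D_def by blast
qed

end
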